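(* There is a universal constant $C$ such that for all positive integers $k,n$ and all distinct integers $g_0,g_1$, there is a $k$-party, one-round, deterministic protocol for the Sum-Distinguish problem over $\mathbb{Z}$ with $n$-bit inputs relative to $g_0,g_1$ with total communication complexity at most $k\log k+C\cdot k$.
   Context: Model: parties $P_1,\dots,P_k$ each hold an integer input $x_i\in\{0,\dots,2^n-1\}$; a coordinator (distinct from the parties) wants to compute $f(x_1,\dots,x_k)$. In a deterministic one-round protocol each party sends a single message, a function of its own input only, to the coordinator, who outputs a value depending only on the received messages; there is no other communication. Total communication complexity is the maximum over inputs of the total number of bits sent. Sum-Distinguish over $\mathbb{Z}$ relative to distinct integers $g_0,g_1$: the partial function $f=1$ if $\sum_i x_i=g_1$ and $f=0$ if $\sum_i x_i=g_0$ (undefined otherwise); the protocol must output the correct value on every input where $f$ is defined. $\log$ is base 2. *)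

theory Defs
  imports Complex_Main
begin

definition valid_inputs :: "nat \<Rightarrow> nat \<Rightarrow> nat list set" where
  "valid_inputs k n = {x. length x = k \<and> (\<forall>i<k. x ! i < 2 ^ n)}"

text \<open>A deterministic one-round protocol: msg i is the message function of party i
  (depends only on its own input); out is the coordinator's output (True = 1, False = 0),
  depending only on the tuple of received messages.\<close>
definition run_protocol ::
  "(nat \<Rightarrow> nat \<Rightarrow> bool list) \<Rightarrow> (bool list list \<Rightarrow> bool) \<Rightarrow> nat list \<Rightarrow> bool" where
  "run_protocol msg out x = out (map (\<lambda>i. msg i (x ! i)) [0..<length x])"

definition bits_sent :: "(nat \<Rightarrow> nat \<Rightarrow> bool list) \<Rightarrow> nat list \<Rightarrow> nat" where
  "bits_sent msg x = (\<Sum>i<length x. length (msg i (x ! i)))"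

definition total_cc :: "nat \<Rightarrow> nat \<Rightarrow> (nat \<Rightarrow> nat \<Rightarrow> bool list) \<Rightarrow> nat" where
  "total_cc k n msg = Max (bits_sent msg ` valid_inputs k n)"

definition solves_sum_distinguish ::
  "nat \<Rightarrow> nat \<Rightarrow> int \<Rightarrow> int \<Rightarrow> (nat \<Rightarrow> nat \<Rightarrow> bool list) \<Rightarrow> (bool list list \<Rightarrow> bool) \<Rightarrow> bool" where
  "solves_sum_distinguish k n g0 g1 msg out \<longleftrightarrow>
     (\<forall>x\<in>valid_inputs k n.
        (int (sum_list x) = g1 \<longrightarrow> run_protocol msg out x = True) \<and>
        (int (sum_list x) = g0 \<longrightarrow> run_protocol msg out x = False))"

end

theory Submission
  imports Defs "HOL-Library.Log_Nat" "HOL-Computational_Algebra.Primes"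
begin

text \<open>Let \<open>2^j\<close> be the exact power of two dividing \<open>g0 - g1\<close> and \<open>M = 2^(j+1)\<close>. Party \<open>i\<close>
  sends \<open>\<lfloor>(x\<^sub>i mod M) S / M\<rfloor>\<close> with \<open>S = 2^s \<ge> 2k\<close>, i.e. \<open>s = \<lceil>log k\<rceil> + 1\<close> bits. These
  messages determine \<open>\<Sum> (x\<^sub>i mod M)\<close> up to an error less than \<open>M k / S \<le> M / 2\<close>. But this
  residue sum is congruent modulo \<open>M\<close> to \<open>\<Sum> x\<^sub>i\<close>, and \<open>g0 \<equiv> g1 + M/2 (mod M)\<close>, so the residue
  sums of an input summing to \<open>g0\<close> and one summing to \<open>g1\<close> differ by at least \<open>M / 2\<close>. Hence no
  message tuple is shared by the two cases, and the coordinator answers 1 exactly when the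
  received messages are consistent with some input summing to \<open>g1\<close>.\<close>

definition transcript :: "(nat \<Rightarrow> nat \<Rightarrow> bool list) \<Rightarrow> nat list \<Rightarrow> bool list list" where
  "transcript msg x = map (\<lambda>i. msg i (x ! i)) [0..<length x]"

definition consistent_with_sum ::
  "nat \<Rightarrow> nat \<Rightarrow> int \<Rightarrow> (nat \<Rightarrow> nat \<Rightarrow> bool list) \<Rightarrow> bool list list \<Rightarrow> bool" where
  "consistent_with_sum k n g msg ms \<longleftrightarrow>
     (\<exists>y\<in>valid_inputs k n. transcript msg y = ms \<and> int (sum_list y) = g)"

lemma transcript_eqD:
  assumes "transcript msg x = transcript msg y" "i < length x"
  shows "msg i (x ! i) = msg i (y ! i)"
proof -
  have "length x = length y"
    using arg_cong[OF assms(1), of length] by (simp add: transcript_def)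
  then show ?thesis
    using arg_cong[OF assms(1), of "\<lambda>ms. ms ! i"] assms(2) by (simp add: transcript_def)
qed

lemma solves_sum_distinguish_consistent_with_sum:
  assumes "\<And>x y. x \<in> valid_inputs k n \<Longrightarrow> y \<in> valid_inputs k n \<Longrightarrow>
             int (sum_list x) = g0 \<Longrightarrow> int (sum_list y) = g1 \<Longrightarrow> transcript msg x \<noteq> transcript msg y"
  shows "solves_sum_distinguish k n g0 g1 msg (consistent_with_sum k n g1 msg)"
  using assms unfolding solves_sum_distinguish_def run_protocol_def consistent_with_sum_def
  by (fastforce simp: transcript_def)

lemma total_cc_const_length:
  assumes "\<And>i v. length (msg i v) = L"
  shows "total_cc k n msg = k * L"
proof -
  have "bits_sent msg x = k * L" if "x \<in> valid_inputs k n" for x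
    using that assms by (simp add: bits_sent_def valid_inputs_def)
  moreover have "replicate k 0 \<in> valid_inputs k n"
    by (simp add: valid_inputs_def)
  ultimately have "bits_sent msg ` valid_inputs k n = {k * L}"
    by (auto intro!: image_eqI)
  then show ?thesis
    by (simp add: total_cc_def)
qed

definition bits :: "nat \<Rightarrow> nat \<Rightarrow> bool list" where
  "bits L v = map (bit v) [0..<L]"

lemma length_bits [simp]: "length (bits L v) = L"
  by (simp add: bits_def)

lemma bits_inj:
  assumes "v < 2 ^ L" "w < 2 ^ L" "bits L v = bits L w"
  shows "v = w"
proof -
  have "take_bit L v = take_bit L w"
    using assms(3) by (intro bit_eqI) (auto simp: bits_def bit_take_bit_iff map_eq_conv)
  then show ?thesis
    using assms(1,2) by (simp add: take_bit_nat_eq_self)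
qed

definition quantize :: "nat \<Rightarrow> nat \<Rightarrow> nat \<Rightarrow> nat" where
  "quantize M S v = (v mod M) * S div M"

lemma quantize_less:
  assumes "M > 0" "S > 0"
  shows "quantize M S v < S"
proof -
  have "(v mod M) * S < M * S"
    using assms by simp
  then show ?thesis
    by (simp add: quantize_def div_less_iff_less_mult mult.commute)
qed

lemma quantize_bounds:
  assumes "M > 0"
  shows "M * quantize M S v \<le> (v mod M) * S"
    and "(v mod M) * S + 1 \<le> M * quantize M S v + M"
proof -
  let ?a = "(v mod M) * S"
  have "?a = M * (?a div M) + ?a mod M" "?a mod M < M"
    using assms by simp_all
  then show "M * quantize M S v \<le> ?a" "?a + 1 \<le> M * quantize M S v + M"
    unfolding quantize_def by linarith+
qed

lemma sum_quantize_bounds: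
  assumes "M > 0"
  shows "M * (\<Sum>i\<in>I. quantize M S (f i)) \<le> S * (\<Sum>i\<in>I. f i mod M)"
    and "S * (\<Sum>i\<in>I. f i mod M) + card I \<le> M * (\<Sum>i\<in>I. quantize M S (f i)) + M * card I"
proof -
  have "M * (\<Sum>i\<in>I. quantize M S (f i)) = (\<Sum>i\<in>I. M * quantize M S (f i))"
    by (simp add: sum_distrib_left)
  also have "\<dots> \<le> (\<Sum>i\<in>I. (f i mod M) * S)"
    by (intro sum_mono quantize_bounds(1)[OF assms])
  finally show "M * (\<Sum>i\<in>I. quantize M S (f i)) \<le> S * (\<Sum>i\<in>I. f i mod M)"
    by (simp add: sum_distrib_left mult.commute)
  have "S * (\<Sum>i\<in>I. f i mod M) + card I = (\<Sum>i\<in>I. (f i mod M) * S + 1)"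
    unfolding sum.distrib by (simp add: sum_distrib_left mult.commute)
  also have "\<dots> \<le> (\<Sum>i\<in>I. M * quantize M S (f i) + M)"
    by (intro sum_mono quantize_bounds(2)[OF assms])
  finally show "S * (\<Sum>i\<in>I. f i mod M) + card I \<le> M * (\<Sum>i\<in>I. quantize M S (f i)) + M * card I"
    by (simp add: sum_distrib_left sum.distrib mult.commute[of "card I"])
qed

lemma residue_sums_close:
  fixes f g :: "nat \<Rightarrow> nat"
  assumes "M > 0" and "\<And>i. i \<in> I \<Longrightarrow> quantize M S (f i) = quantize M S (g i)"
  defines "A \<equiv> \<Sum>i\<in>I. f i mod M" and "B \<equiv> \<Sum>i\<in>I. g i mod M"
  shows "int S * \<bar>int A - int B\<bar> + int (card I) \<le> int M * int (card I)"
proof -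
  define Q where "Q = (\<Sum>i\<in>I. quantize M S (f i))"
  have same: "(\<Sum>i\<in>I. quantize M S (g i)) = Q"
    unfolding Q_def using assms(2) by (rule sum.cong[OF refl, symmetric])
  have "M * Q \<le> S * A" "S * A + card I \<le> M * Q + M * card I"
    using sum_quantize_bounds[OF assms(1), of S f I] unfolding A_def Q_def by simp_all
  moreover have "M * Q \<le> S * B" "S * B + card I \<le> M * Q + M * card I"
    using sum_quantize_bounds[OF assms(1), of S g I] same unfolding B_def by simp_all
  ultimately have "S * A + card I \<le> S * B + M * card I" "S * B + card I \<le> S * A + M * card I"
    by linarith+
  then have "int S * int A + int (card I) \<le> int S * int B + int M * int (card I)"
    "int S * int B + int (card I) \<le> int S * int A + int M * int (card I)"
    by (simp_all flip: of_nat_mult of_nat_add)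
  then show ?thesis
    by (simp add: abs_if right_diff_distrib)
qed

lemma half_modulus_le_abs:
  fixes d e h :: int
  assumes "2 * h dvd d - e" "h dvd d" "\<not> 2 * h dvd d"
  shows "h \<le> \<bar>e\<bar>"
proof -
  have "h dvd d - e"
    using assms(1) by (rule dvd_mult_right)
  then have "h dvd d - (d - e)"
    using assms(2) by (rule dvd_diff[rotated])
  moreover have "e \<noteq> 0"
    using assms(1,3) by auto
  ultimately show ?thesis
    by (intro zdvd_imp_le) simp_all
qed

lemma sum_residues_cong:
  "int M dvd int (sum_list x) - int (\<Sum>i<length x. x ! i mod M)"
proof -
  have "(\<Sum>i<length x. x ! i mod M) mod M = sum_list x mod M"
    by (simp add: mod_sum_eq sum_list_sum_nth atLeast0LessThan)
  then have "int (sum_list x mod M) = int ((\<Sum>i<length x. x ! i mod M) mod M)"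
    by simp
  then show ?thesis
    by (simp add: of_nat_mod mod_eq_dvd_iff)
qed

lemma quantized_residues_separate:
  assumes "length x = k" "length y = k" "k \<ge> 1" "2 * k \<le> S"
    and "\<And>i. i < k \<Longrightarrow> quantize (2 * h) S (x ! i) = quantize (2 * h) S (y ! i)"
    and "int h dvd int (sum_list x) - int (sum_list y)"
    and "\<not> int (2 * h) dvd int (sum_list x) - int (sum_list y)"
  shows False
proof -
  define A where "A = (\<Sum>i<k. x ! i mod (2 * h))"
  define B where "B = (\<Sum>i<k. y ! i mod (2 * h))"
  have "h > 0"
    using assms(6,7) by (cases "h = 0") simp_all
  have "int (2 * h) dvd (int (sum_list x) - int A) - (int (sum_list y) - int B)"
    using dvd_diff[OF sum_residues_cong[of "2 * h" x] sum_residues_cong[of "2 * h" y]] assms(1,2)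
    unfolding A_def B_def by simp
  then have "int (2 * h) dvd (int (sum_list x) - int (sum_list y)) - (int A - int B)"
    by (simp add: algebra_simps)
  then have "int h \<le> \<bar>int A - int B\<bar>"
    using half_modulus_le_abs assms(6,7) by simp
  then have "int (2 * k) * int h \<le> int S * \<bar>int A - int B\<bar>"
    using assms(4) by (intro mult_mono) simp_all
  moreover have "int S * \<bar>int A - int B\<bar> + int k \<le> int (2 * h) * int k"
    using residue_sums_close[of "2 * h" "{..<k}" S "\<lambda>i. x ! i" "\<lambda>i. y ! i"] \<open>h > 0\<close> assms(5)
    unfolding A_def B_def by simp
  ultimately show False
    using assms(3) by (simp add: algebra_simps)
qed

definition quantizer_msg :: "nat \<Rightarrow> nat \<Rightarrow> nat \<Rightarrow> nat \<Rightarrow> bool list" where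
  "quantizer_msg M s i v = bits s (quantize M (2 ^ s) v)"

lemma quantizer_msg_separates:
  assumes "k \<ge> 1" "2 * k \<le> 2 ^ s" "int h dvd g0 - g1" "\<not> int (2 * h) dvd g0 - g1"
    and "x \<in> valid_inputs k n" "y \<in> valid_inputs k n" "int (sum_list x) = g0" "int (sum_list y) = g1"
  shows "transcript (quantizer_msg (2 * h) s) x \<noteq> transcript (quantizer_msg (2 * h) s) y"
proof
  assume eq: "transcript (quantizer_msg (2 * h) s) x = transcript (quantizer_msg (2 * h) s) y"
  have "h > 0"
    using assms(3,4) by (cases "h = 0") simp_all
  have len: "length x = k" "length y = k"
    using assms(5,6) by (simp_all add: valid_inputs_def)
  have same: "quantize (2 * h) (2 ^ s) (x ! i) = quantize (2 * h) (2 ^ s) (y ! i)" if "i < k" for i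
    using transcript_eqD[OF eq] that len \<open>h > 0\<close>
    by (intro bits_inj[of _ s]) (simp_all add: quantizer_msg_def quantize_less)
  show False
    by (rule quantized_residues_separate[OF len assms(1,2) same]) (use assms(3,4,7,8) in simp_all)
qed

theorem mainTheorem10:
  shows "\<exists>C::real. \<forall>k n::nat. \<forall>g0 g1::int. k \<ge> 1 \<longrightarrow> n \<ge> 1 \<longrightarrow> g0 \<noteq> g1 \<longrightarrow>
    (\<exists>msg out. solves_sum_distinguish k n g0 g1 msg out \<and>
       real (total_cc k n msg) \<le> real k * log 2 (real k) + C * real k)"
proof (rule exI[of _ 2], intro allI impI)
  fix k n :: nat and g0 g1 :: int
  assume k: "k \<ge> 1" and "n \<ge> 1" and "g0 \<noteq> g1"
  define h :: nat where "h = 2 ^ multiplicity 2 (g0 - g1)"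
  define s where "s = ceillog2 k + 1"
  define msg where "msg = quantizer_msg (2 * h) s"
  have "int h dvd g0 - g1" "\<not> int (2 * h) dvd g0 - g1"
    using multiplicity_dvd power_dvd_iff_le_multiplicity[of "g0 - g1" 2 "Suc _"] \<open>g0 \<noteq> g1\<close>
    by (auto simp: h_def)
  moreover have "2 * k \<le> 2 ^ s"
    using le_two_power_ceillog2[of k] by (simp add: s_def)
  ultimately have "solves_sum_distinguish k n g0 g1 msg (consistent_with_sum k n g1 msg)"
    unfolding msg_def using k
    by (intro solves_sum_distinguish_consistent_with_sum quantizer_msg_separates) auto
  moreover have "real (total_cc k n msg) \<le> real k * log 2 (real k) + 2 * real k"
  proof -
    have "real (total_cc k n msg) = real k * real s"
      by (simp add: total_cc_const_length msg_def quantizer_msg_def)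
    also have "\<dots> \<le> real k * (log 2 (real k) + 2)"
      using ceillog2_less_log[of k] k by (intro mult_left_mono) (simp_all add: s_def)
    finally show ?thesis
      by (simp add: algebra_simps)
  qed
  ultimately show "\<exists>msg out. solves_sum_distinguish k n g0 g1 msg out \<and>
      real (total_cc k n msg) \<le> real k * log 2 (real k) + 2 * real k"
    by blast
qed

end
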